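(* Let $\pi$ be a probability density on $(\mathbb{R}^{n})^t$, $t\ge1$, and let $q'(\cdot|\cdot)$ be a symmetric transition density on $\mathbb{R}^n$, i.e. $q'(a|b)=q'(b|a)$ for all $a,b$. Define a Markov transition kernel on $(\mathbb{R}^n)^t$ as follows: from the current state $x_{1:t}$, draw $\tilde x_{1:t}$ from $q(\tilde x_{1:t}|x_{1:t})=\prod_{j=1}^t q'(\tilde x_j|x_j)$; then set the next state $y_{1:t}$ to $\Gamma_{p,t}(x_{1:t})$ with probability $\beta_p/S$ or to $\Gamma_{p,t}(\tilde x_{1:t})$ with probability $\tilde\beta_p/S$, for $p=1,\dots,t!$, where $\beta_p=\pi(\Gamma_{p,t}(x_{1:t}))$, $\tilde\beta_p=\pi(\Gamma_{p,t}(\tilde x_{1:t}))$ and $S=\sum_{p=1}^{t!}(\beta_p+\tilde\beta_p)$. Then this kernel satisfies detailed balance with respect to $\pi$, and hence $\pi$ is an invariant density of the kernel.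
   Context: $\Gamma_{p,t}$, $p=1,\dots,t!$, enumerates the permutations acting on the $t$ components of a vector $x_{1:t}=(x_1,\dots,x_t)\in(\mathbb{R}^n)^t$. The current state $x_{1:t}$ is assumed to satisfy $\pi(x_{1:t})>0$ so that $S>0$. *)

theory Defs
  imports "HOL-Analysis.Analysis" "HOL-Combinatorics.Permutations"
begin

text \<open>States are x_{1:t} in (R^n)^t, modelled as real^'n^'t: the index type 't has
  t elements, component j is x $ j :: real^'n.\<close>

text \<open>The permutations Gamma_{p,t}, p = 1..t!, acting on the t components:
  they are exactly the maps perm_apply sigma with sigma a permutation of the index set.\<close>
definition perm_apply :: "('t::finite \<Rightarrow> 't) \<Rightarrow> real^'n^'t \<Rightarrow> real^'n^'t" where
  "perm_apply \<sigma> x = (\<chi> j. x $ \<sigma> j)"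

definition perms :: "('t::finite \<Rightarrow> 't) set" where
  "perms = {\<sigma>. \<sigma> permutes (UNIV :: 't set)}"

text \<open>Product proposal q(xt | x) = prod_j q'(xt_j | x_j); q' a b denotes q'(a|b).\<close>
definition prop_q :: "(real^'n \<Rightarrow> real^'n \<Rightarrow> real) \<Rightarrow> real^'n^'t \<Rightarrow> real^'n^'t \<Rightarrow> real" where
  "prop_q q' x xt = (\<Prod>j\<in>UNIV. q' (xt $ j) (x $ j))"

definition norm_S :: "(real^'n^'t \<Rightarrow> real) \<Rightarrow> real^'n^'t \<Rightarrow> real^'n^'t \<Rightarrow> real" where
  "norm_S \<pi> x xt = (\<Sum>\<sigma>\<in>perms. \<pi> (perm_apply \<sigma> x) + \<pi> (perm_apply \<sigma> xt))"

text \<open>The Markov kernel K, given by its action on nonnegative test functions g: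
  (K g)(x) = int q(xt|x) sum_p [ beta_p/S g(Gamma_p x) + betat_p/S g(Gamma_p xt) ] dxt.\<close>
definition kernel_op ::
  "(real^'n^'t \<Rightarrow> real) \<Rightarrow> (real^'n \<Rightarrow> real^'n \<Rightarrow> real) \<Rightarrow> real^'n^'t
     \<Rightarrow> (real^'n^'t \<Rightarrow> ennreal) \<Rightarrow> ennreal" where
  "kernel_op \<pi> q' x g =
     (\<integral>\<^sup>+ xt. ennreal (prop_q q' x xt) *
        (\<Sum>\<sigma>\<in>perms.
            ennreal (\<pi> (perm_apply \<sigma> x) / norm_S \<pi> x xt) * g (perm_apply \<sigma> x)
          + ennreal (\<pi> (perm_apply \<sigma> xt) / norm_S \<pi> x xt) * g (perm_apply \<sigma> xt)) \<partial>lborel)"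

end

theory Submission
  imports Defs
begin

text \<open>Write W(x, xt) = q(xt | x) / S(x, xt) (flow_weight). Then pi(x) K(x, dy) is a sum over
  sigma of the terms W pi(x) pi(Gamma_sigma x) at y = Gamma_sigma x (stay_flux) and
  W pi(x) pi(Gamma_sigma xt) at y = Gamma_sigma xt (move_flux). The weight W is unchanged when one
  permutation is applied to both x and xt (S sums over all permutations, q is a product over the
  components) and, as q' is symmetric, when x and xt are exchanged. Since Gamma_sigma preserves
  Lebesgue measure, the substitution (x, xt) := (Gamma_sigma x, Gamma_sigma xt), followed for the
  second kind of term by exchanging x and xt, turns the sigma-term of the flow from x to y into the
  inverse-sigma-term of the flow from y to x. Invariance is the special case of a test function of
  y alone, because K(x, -) has total mass 1 wherever pi(x) > 0.\<close>

lemma mem_box_vec: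
  "(x::'a::euclidean_space^'t::finite) \<in> box l u \<longleftrightarrow> (\<forall>i. x $ i \<in> box (l $ i) (u $ i))"
  by (auto simp: mem_box Basis_vec_def inner_axis)

lemma prod_Basis_vec:
  "(\<Prod>b\<in>(Basis::('a::euclidean_space^'t::finite) set). F b) = (\<Prod>i\<in>UNIV. \<Prod>v\<in>Basis. F (axis i v))"
proof -
  have "(\<Prod>b\<in>(\<Union>i. \<Union>v\<in>Basis. {axis i v}). F b) = (\<Prod>i\<in>UNIV. \<Prod>b\<in>(\<Union>v\<in>Basis. {axis i v}). F b)"
    by (rule prod.UNION_disjoint) (auto simp: axis_eq_axis)
  also have "\<dots> = (\<Prod>i\<in>UNIV. \<Prod>v\<in>Basis. F (axis i v))"
    by (intro prod.cong refl, subst prod.UNION_disjoint) (auto simp: axis_eq_axis)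
  finally show ?thesis
    by (simp add: Basis_vec_def)
qed

lemma continuous_on_perm_apply: "continuous_on UNIV (perm_apply \<sigma>)"
  unfolding perm_apply_def by (intro continuous_intros)

lemma borel_measurable_perm_apply[measurable]: "perm_apply \<sigma> \<in> borel_measurable borel"
  by (rule borel_measurable_continuous_onI[OF continuous_on_perm_apply])

lemma perm_apply_perm_apply: "perm_apply \<tau> (perm_apply \<sigma> x) = perm_apply (\<sigma> \<circ> \<tau>) x"
  by (simp add: perm_apply_def)

lemma perm_apply_id: "perm_apply id x = x"
  by (simp add: perm_apply_def)

lemma perm_apply_inv_cancel:
  assumes "\<sigma> permutes UNIV"
  shows "perm_apply (inv \<sigma>) (perm_apply \<sigma> x) = x"
  by (simp add: perm_apply_perm_apply permutes_inv_o[OF assms] perm_apply_id)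

lemma distr_lborel_perm_apply:
  assumes \<sigma>: "\<sigma> permutes (UNIV::'t::finite set)"
  shows "distr lborel borel (perm_apply \<sigma>) = (lborel :: (real^'n^'t) measure)"
proof (rule lborel_eqI[symmetric])
  fix l u :: "real^'n^'t"
  assume le: "\<And>b. b \<in> Basis \<Longrightarrow> l \<bullet> b \<le> u \<bullet> b"
  define \<tau> where "\<tau> = inv \<sigma>"
  have \<tau>: "\<tau> permutes UNIV"
    unfolding \<tau>_def using \<sigma> by (rule permutes_inv)
  have preimage: "perm_apply \<sigma> -` box l u = box (perm_apply \<tau> l) (perm_apply \<tau> u)"
  proof -
    have "(\<forall>i. x $ \<sigma> i \<in> box (l $ i) (u $ i)) \<longleftrightarrow> (\<forall>i. x $ i \<in> box (l $ \<tau> i) (u $ \<tau> i))" for x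
      using \<sigma> unfolding \<tau>_def by (metis permutes_inverses)
    then show ?thesis
      by (auto simp: mem_box_vec perm_apply_def)
  qed
  have le': "perm_apply \<tau> l \<bullet> b \<le> perm_apply \<tau> u \<bullet> b" if "b \<in> Basis" for b
  proof -
    from that obtain i v where b: "b = axis i v" "v \<in> Basis"
      unfolding Basis_vec_def by auto
    then show ?thesis
      using le[of "axis (\<tau> i) v"] by (simp add: inner_axis perm_apply_def)
  qed
  have "emeasure (distr lborel borel (perm_apply \<sigma>)) (box l u)
      = emeasure lborel (box (perm_apply \<tau> l) (perm_apply \<tau> u))"
    by (simp add: emeasure_distr preimage)
  also have "\<dots> = ennreal (\<Prod>i\<in>UNIV. \<Prod>v\<in>Basis. (u $ \<tau> i - l $ \<tau> i) \<bullet> v)"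
    using le' by (simp add: emeasure_lborel_box_eq prod_Basis_vec inner_axis perm_apply_def)
  also have "(\<Prod>i\<in>UNIV. \<Prod>v\<in>Basis. (u $ \<tau> i - l $ \<tau> i) \<bullet> v) = (\<Prod>i\<in>UNIV. \<Prod>v\<in>Basis. (u $ i - l $ i) \<bullet> v)"
    using prod.permute[OF \<tau>, of "\<lambda>i. \<Prod>v\<in>Basis. (u $ i - l $ i) \<bullet> v"] by (simp add: comp_def)
  also have "\<dots> = (\<Prod>b\<in>Basis. (u - l) \<bullet> b)"
    by (simp add: prod_Basis_vec inner_axis)
  finally show "emeasure (distr lborel borel (perm_apply \<sigma>)) (box l u) = (\<Prod>b\<in>Basis. (u - l) \<bullet> b)" .
qed simp

lemma borel_measurable_vec_nth[measurable]:
  "(\<lambda>x::'a::real_normed_vector^'t::finite. x $ j) \<in> borel_measurable borel"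
  by (rule borel_measurable_continuous_onI) (intro continuous_intros)

lemma measurable_vec_lambda_PiM:
  "(\<lambda>F. \<chi> j. F j) \<in> borel_measurable (PiM (UNIV::'t::finite set) (\<lambda>_. (lborel::'a::euclidean_space measure)))"
proof (subst borel_measurable_euclidean_space, intro ballI)
  fix b :: "'a^'t"
  assume "b \<in> Basis"
  then obtain i v where b: "b = axis i v" "v \<in> Basis"
    unfolding Basis_vec_def by auto
  have "(\<lambda>F. F i \<bullet> v) \<in> borel_measurable (PiM (UNIV::'t set) (\<lambda>_. (lborel::'a measure)))"
    by measurable
  then show "(\<lambda>F. (\<chi> j. F j) \<bullet> b) \<in> borel_measurable (PiM UNIV (\<lambda>_. lborel))"
    using b by (simp add: inner_axis)
qed

lemma lborel_vec_eq_PiM: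
  "(lborel :: ('a::euclidean_space^'t::finite) measure) = distr (PiM UNIV (\<lambda>_. lborel)) borel (\<lambda>F. \<chi> j. F j)"
proof (rule lborel_eqI)
  interpret product_sigma_finite "\<lambda>_::'t. (lborel::'a measure)" by standard
  fix l u :: "'a^'t"
  assume le: "\<And>b. b \<in> Basis \<Longrightarrow> l \<bullet> b \<le> u \<bullet> b"
  have le': "l $ i \<bullet> v \<le> u $ i \<bullet> v" if "v \<in> Basis" for i v
    using le[of "axis i v"] that by (simp add: inner_axis)
  have preimage: "(\<lambda>F. \<chi> j. F j) -` box l u \<inter> space (PiM UNIV (\<lambda>_::'t. (lborel::'a measure)))
      = Pi\<^sub>E UNIV (\<lambda>j. box (l $ j) (u $ j))"
    by (auto simp: mem_box_vec space_PiM PiE_def Pi_def extensional_def)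
  have "emeasure (distr (PiM UNIV (\<lambda>_. lborel)) borel (\<lambda>F. \<chi> j. F j)) (box l u)
      = emeasure (PiM UNIV (\<lambda>_. lborel)) (Pi\<^sub>E UNIV (\<lambda>j. box (l $ j) (u $ j)))"
    by (subst emeasure_distr[OF measurable_vec_lambda_PiM]) (simp_all add: preimage)
  also have "\<dots> = (\<Prod>j\<in>UNIV. emeasure lborel (box (l $ j) (u $ j)))"
    by (rule emeasure_PiM) auto
  also have "\<dots> = ennreal (\<Prod>j\<in>UNIV. \<Prod>v\<in>Basis. (u $ j - l $ j) \<bullet> v)"
    using le' by (simp add: emeasure_lborel_box_eq prod_ennreal prod_nonneg inner_diff_left)
  also have "\<dots> = ennreal (\<Prod>b\<in>Basis. (u - l) \<bullet> b)"
    by (simp add: prod_Basis_vec inner_axis)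
  finally show "emeasure (distr (PiM UNIV (\<lambda>_. lborel)) borel (\<lambda>F. \<chi> j. F j)) (box l u)
      = (\<Prod>b\<in>Basis. (u - l) \<bullet> b)" .
qed simp

lemma nn_integral_lborel_vec_prod:
  fixes h :: "'t::finite \<Rightarrow> 'a::euclidean_space \<Rightarrow> ennreal"
  assumes [measurable]: "\<And>j. h j \<in> borel_measurable borel"
  shows "(\<integral>\<^sup>+ x. (\<Prod>j\<in>UNIV. h j (x $ j)) \<partial>lborel) = (\<Prod>j\<in>UNIV. \<integral>\<^sup>+ y. h j y \<partial>lborel)"
proof -
  interpret product_sigma_finite "\<lambda>_::'t. (lborel::'a measure)" by standard
  have "(\<integral>\<^sup>+ x. (\<Prod>j\<in>UNIV. h j (x $ j)) \<partial>lborel)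
     = (\<integral>\<^sup>+ F. (\<Prod>j\<in>UNIV. h j (F j)) \<partial>(PiM UNIV (\<lambda>_. lborel)))"
    by (subst lborel_vec_eq_PiM, subst nn_integral_distr[OF measurable_vec_lambda_PiM]) simp_all
  also have "\<dots> = (\<Prod>j\<in>UNIV. \<integral>\<^sup>+ y. h j y \<partial>lborel)"
    by (rule product_nn_integral_prod) auto
  finally show ?thesis .
qed

lemma borel_measurable_prop_q[measurable]:
  assumes q: "(\<lambda>(a, b). q' a b) \<in> borel_measurable borel"
    and [measurable]: "f \<in> borel_measurable M" "g \<in> borel_measurable M"
  shows "(\<lambda>z. prop_q q' (f z) (g z)) \<in> borel_measurable M"
proof -
  have "(\<lambda>z. q' (g z $ j) (f z $ j)) \<in> borel_measurable M" for j
  proof -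
    have "(\<lambda>z. (g z $ j, f z $ j)) \<in> measurable M borel"
      unfolding borel_prod[symmetric] by measurable
    from measurable_compose[OF this q] show ?thesis by simp
  qed
  then show ?thesis
    unfolding prop_q_def by measurable
qed

lemma borel_measurable_norm_S[measurable]:
  assumes [measurable]: "\<pi> \<in> borel_measurable borel" "f \<in> borel_measurable M" "g \<in> borel_measurable M"
  shows "(\<lambda>z. norm_S \<pi> (f z) (g z)) \<in> borel_measurable M"
  unfolding norm_S_def by measurable

lemma nn_integral_prop_q:
  assumes q_meas: "(\<lambda>(a, b). q' a b) \<in> borel_measurable borel"
    and q_nonneg: "\<And>a b. q' a b \<ge> 0"
    and q_prob: "\<And>b. (\<integral>\<^sup>+ a. ennreal (q' a b) \<partial>lborel) = 1"
  shows "(\<integral>\<^sup>+ xt. ennreal (prop_q q' x xt) \<partial>lborel) = 1"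
proof -
  have "(\<lambda>a. ennreal (q' a b)) \<in> borel_measurable borel" for b
  proof -
    have "(\<lambda>a::real^'n. (a, b)) \<in> measurable borel borel"
      unfolding borel_prod[symmetric] by measurable
    from measurable_compose[OF this q_meas] show ?thesis by simp
  qed
  then have "(\<integral>\<^sup>+ xt. (\<Prod>j\<in>UNIV. ennreal (q' (xt $ j) (x $ j))) \<partial>lborel)
      = (\<Prod>j\<in>UNIV. \<integral>\<^sup>+ a. ennreal (q' a (x $ j)) \<partial>lborel)"
    by (intro nn_integral_lborel_vec_prod)
  then show ?thesis
    by (simp add: prop_q_def prod_ennreal q_nonneg q_prob)
qed

lemma prop_q_perm_apply:
  assumes "\<sigma> permutes UNIV"
  shows "prop_q q' (perm_apply \<sigma> x) (perm_apply \<sigma> xt) = prop_q q' x xt"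
  unfolding prop_q_def perm_apply_def
  using prod.permute[OF assms, of "\<lambda>j. q' (xt $ j) (x $ j)"] by (simp add: comp_def)

lemma prop_q_swap:
  assumes "\<And>a b. q' a b = q' b a"
  shows "prop_q q' xt x = prop_q q' x xt"
  unfolding prop_q_def using assms by simp

lemma sum_perms_reindex_inv: "(\<Sum>\<sigma>\<in>perms. F (inv \<sigma>)) = (\<Sum>\<sigma>\<in>perms. F \<sigma>)"
  by (rule sum.reindex_bij_witness[where i=inv and j=inv])
     (auto simp: perms_def permutes_inv_inv permutes_inv)

lemma norm_S_swap: "norm_S \<pi> xt x = norm_S \<pi> x xt"
  unfolding norm_S_def by (simp add: add.commute)

lemma norm_S_perm_apply:
  assumes \<sigma>: "\<sigma> permutes UNIV"
  shows "norm_S \<pi> (perm_apply \<sigma> x) (perm_apply \<sigma> xt) = norm_S \<pi> x xt"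
proof -
  have "norm_S \<pi> (perm_apply \<sigma> x) (perm_apply \<sigma> xt)
      = (\<Sum>\<tau>\<in>perms. \<pi> (perm_apply (\<sigma> \<circ> \<tau>) x) + \<pi> (perm_apply (\<sigma> \<circ> \<tau>) xt))"
    unfolding norm_S_def by (simp add: perm_apply_perm_apply)
  also have "\<dots> = norm_S \<pi> x xt"
    unfolding norm_S_def
    by (rule sum.reindex_bij_witness[where i="\<lambda>\<tau>. inv \<sigma> \<circ> \<tau>" and j="\<lambda>\<tau>. \<sigma> \<circ> \<tau>"])
       (auto simp: perms_def o_assoc permutes_inv_o[OF \<sigma>] permutes_compose permutes_inv \<sigma>)
  finally show ?thesis .
qed

lemma norm_S_pos:
  assumes "\<And>x. \<pi> x \<ge> 0" and "\<pi> x > 0"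
  shows "norm_S \<pi> x xt > 0"
proof -
  have "id \<in> perms"
    unfolding perms_def using permutes_id by blast
  then have "\<pi> (perm_apply id x) + \<pi> (perm_apply id xt) \<le> norm_S \<pi> x xt"
    unfolding norm_S_def by (rule member_le_sum) (auto intro: add_nonneg_nonneg assms)
  then show ?thesis
    using assms(1)[of xt] assms(2) by (simp add: perm_apply_id)
qed

lemma nn_integral_pair_lborel_perm_apply:
  fixes h :: "(real^'n^'t::finite) \<times> (real^'n^'t) \<Rightarrow> ennreal"
  assumes \<sigma>: "\<sigma> permutes UNIV" and h: "h \<in> borel_measurable (lborel \<Otimes>\<^sub>M lborel)"
  shows "(\<integral>\<^sup>+ z. h (perm_apply \<sigma> (fst z), perm_apply \<sigma> (snd z)) \<partial>(lborel \<Otimes>\<^sub>M lborel))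
       = integral\<^sup>N (lborel \<Otimes>\<^sub>M lborel) h"
proof -
  have D: "(lborel \<Otimes>\<^sub>M lborel :: ((real^'n^'t) \<times> (real^'n^'t)) measure)
      = distr (lborel \<Otimes>\<^sub>M lborel) (borel \<Otimes>\<^sub>M borel) (\<lambda>(x, y). (perm_apply \<sigma> x, perm_apply \<sigma> y))"
    using pair_measure_distr[of "perm_apply \<sigma>" lborel borel "perm_apply \<sigma>" lborel borel]
    by (simp add: distr_lborel_perm_apply[OF \<sigma>] sigma_finite_lborel)
  have "h \<in> borel_measurable (borel \<Otimes>\<^sub>M borel)"
    using h by (simp cong: measurable_cong_sets)
  then have "integral\<^sup>N (distr (lborel \<Otimes>\<^sub>M lborel) (borel \<Otimes>\<^sub>M borel)
        (\<lambda>(x, y). (perm_apply \<sigma> x, perm_apply \<sigma> y))) h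
      = (\<integral>\<^sup>+ z. h (perm_apply \<sigma> (fst z), perm_apply \<sigma> (snd z)) \<partial>(lborel \<Otimes>\<^sub>M lborel))"
    by (subst nn_integral_distr) (auto simp: case_prod_beta)
  then show ?thesis
    by (simp flip: D)
qed

lemma (in sigma_finite_measure) nn_integral_pair_swap:
  assumes h: "h \<in> borel_measurable (M \<Otimes>\<^sub>M M)"
  shows "(\<integral>\<^sup>+ z. h (snd z, fst z) \<partial>(M \<Otimes>\<^sub>M M)) = integral\<^sup>N (M \<Otimes>\<^sub>M M) h"
proof -
  interpret pair_sigma_finite M M ..
  have "integral\<^sup>N (M \<Otimes>\<^sub>M M) h = integral\<^sup>N (distr (M \<Otimes>\<^sub>M M) (M \<Otimes>\<^sub>M M) (\<lambda>(x, y). (y, x))) h"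
    by (simp flip: distr_pair_swap)
  also have "\<dots> = (\<integral>\<^sup>+ z. h (snd z, fst z) \<partial>(M \<Otimes>\<^sub>M M))"
    using h by (simp add: nn_integral_distr measurable_pair_swap' case_prod_beta)
  finally show ?thesis ..
qed

definition flow_weight ::
  "(real^'n^'t::finite \<Rightarrow> real) \<Rightarrow> (real^'n \<Rightarrow> real^'n \<Rightarrow> real) \<Rightarrow> real^'n^'t \<Rightarrow> real^'n^'t \<Rightarrow> ennreal"
  where "flow_weight \<pi> q' x xt = ennreal (prop_q q' x xt) * ennreal (1 / norm_S \<pi> x xt)"

definition stay_flux ::
  "(real^'n^'t::finite \<Rightarrow> real) \<Rightarrow> (real^'n \<Rightarrow> real^'n \<Rightarrow> real)
     \<Rightarrow> ((real^'n^'t) \<times> (real^'n^'t) \<Rightarrow> ennreal) \<Rightarrow> ('t \<Rightarrow> 't) \<Rightarrow> ennreal"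
  where "stay_flux \<pi> q' l \<sigma> =
    (\<integral>\<^sup>+ (x, xt). flow_weight \<pi> q' x xt * ennreal (\<pi> x) * ennreal (\<pi> (perm_apply \<sigma> x))
        * l (x, perm_apply \<sigma> x) \<partial>(lborel \<Otimes>\<^sub>M lborel))"

definition move_flux ::
  "(real^'n^'t::finite \<Rightarrow> real) \<Rightarrow> (real^'n \<Rightarrow> real^'n \<Rightarrow> real)
     \<Rightarrow> ((real^'n^'t) \<times> (real^'n^'t) \<Rightarrow> ennreal) \<Rightarrow> ('t \<Rightarrow> 't) \<Rightarrow> ennreal"
  where "move_flux \<pi> q' l \<sigma> =
    (\<integral>\<^sup>+ (x, xt). flow_weight \<pi> q' x xt * ennreal (\<pi> x) * ennreal (\<pi> (perm_apply \<sigma> xt))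
        * l (x, perm_apply \<sigma> xt) \<partial>(lborel \<Otimes>\<^sub>M lborel))"

lemma borel_measurable_flow_weight[measurable]:
  assumes "\<pi> \<in> borel_measurable borel" "(\<lambda>(a, b). q' a b) \<in> borel_measurable borel"
    and "f \<in> borel_measurable M" "g \<in> borel_measurable M"
  shows "(\<lambda>z. flow_weight \<pi> q' (f z) (g z)) \<in> borel_measurable M"
  unfolding flow_weight_def using assms by measurable

lemma flow_weight_perm_apply:
  "\<sigma> permutes UNIV \<Longrightarrow> flow_weight \<pi> q' (perm_apply \<sigma> x) (perm_apply \<sigma> xt) = flow_weight \<pi> q' x xt"
  by (simp add: flow_weight_def prop_q_perm_apply norm_S_perm_apply)

lemma flow_weight_swap:
  "(\<And>a b. q' a b = q' b a) \<Longrightarrow> flow_weight \<pi> q' xt x = flow_weight \<pi> q' x xt"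
  by (simp add: flow_weight_def prop_q_swap norm_S_swap)

lemma nn_integral_kernel_op_eq_fluxes:
  assumes pi_meas[measurable]: "\<pi> \<in> borel_measurable borel"
    and pi_nonneg: "\<And>x. \<pi> x \<ge> 0"
    and q_meas: "(\<lambda>(a, b). q' a b) \<in> borel_measurable borel"
    and l_meas[measurable]: "l \<in> borel_measurable (borel \<Otimes>\<^sub>M borel)"
  shows "(\<integral>\<^sup>+ x. ennreal (\<pi> x) * kernel_op \<pi> q' x (\<lambda>y. l (x, y)) \<partial>lborel)
       = (\<Sum>\<sigma>\<in>perms. stay_flux \<pi> q' l \<sigma>) + (\<Sum>\<sigma>\<in>perms. move_flux \<pi> q' l \<sigma>)"
proof -
  note [measurable] = borel_measurable_prop_q[OF q_meas] borel_measurable_flow_weight[OF pi_meas q_meas]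
  define stay where "stay \<sigma> x xt = flow_weight \<pi> q' x xt * ennreal (\<pi> x) * ennreal (\<pi> (perm_apply \<sigma> x))
      * l (x, perm_apply \<sigma> x)" for \<sigma> x xt
  define move where "move \<sigma> x xt = flow_weight \<pi> q' x xt * ennreal (\<pi> x) * ennreal (\<pi> (perm_apply \<sigma> xt))
      * l (x, perm_apply \<sigma> xt)" for \<sigma> x xt
  have [measurable]: "(\<lambda>(x, xt). stay \<sigma> x xt) \<in> borel_measurable (lborel \<Otimes>\<^sub>M lborel)"
    "(\<lambda>(x, xt). move \<sigma> x xt) \<in> borel_measurable (lborel \<Otimes>\<^sub>M lborel)" for \<sigma>
    unfolding stay_def move_def by measurable
  have weighted_term: "ennreal (\<pi> x) * (ennreal (prop_q q' x xt) * (ennreal (a / norm_S \<pi> x xt) * m))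
      = flow_weight \<pi> q' x xt * ennreal (\<pi> x) * ennreal a * m" if "a \<ge> 0" for x xt a m
    using ennreal_mult'[OF that, of "1 / norm_S \<pi> x xt"] by (simp add: flow_weight_def mult_ac)
  have integrand: "ennreal (\<pi> x) * (ennreal (prop_q q' x xt) *
      (\<Sum>\<sigma>\<in>perms. ennreal (\<pi> (perm_apply \<sigma> x) / norm_S \<pi> x xt) * l (x, perm_apply \<sigma> x)
        + ennreal (\<pi> (perm_apply \<sigma> xt) / norm_S \<pi> x xt) * l (x, perm_apply \<sigma> xt)))
    = (\<Sum>\<sigma>\<in>perms. stay \<sigma> x xt + move \<sigma> x xt)" for x xt
    unfolding sum_distrib_left distrib_left
    by (simp add: weighted_term pi_nonneg stay_def move_def)
  have "(\<integral>\<^sup>+ x. ennreal (\<pi> x) * kernel_op \<pi> q' x (\<lambda>y. l (x, y)) \<partial>lborel)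
      = (\<integral>\<^sup>+ x. \<integral>\<^sup>+ xt. (\<Sum>\<sigma>\<in>perms. stay \<sigma> x xt + move \<sigma> x xt) \<partial>lborel \<partial>lborel)"
    unfolding kernel_op_def integrand[symmetric]
    by (intro nn_integral_cong nn_integral_cmult[symmetric]) measurable
  also have "\<dots> = (\<integral>\<^sup>+ (x, xt). (\<Sum>\<sigma>\<in>perms. stay \<sigma> x xt + move \<sigma> x xt) \<partial>(lborel \<Otimes>\<^sub>M lborel))"
    by (subst lborel.nn_integral_fst[symmetric]) auto
  also have "\<dots> = (\<Sum>\<sigma>\<in>perms. stay_flux \<pi> q' l \<sigma>) + (\<Sum>\<sigma>\<in>perms. move_flux \<pi> q' l \<sigma>)"
    by (simp add: case_prod_beta' nn_integral_sum nn_integral_add sum.distrib stay_flux_def move_flux_def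
        stay_def[symmetric] move_def[symmetric])
  finally show ?thesis .
qed

lemma stay_flux_reverse:
  assumes pi_meas[measurable]: "\<pi> \<in> borel_measurable borel"
    and q_meas: "(\<lambda>(a, b). q' a b) \<in> borel_measurable borel"
    and l_meas[measurable]: "l \<in> borel_measurable (borel \<Otimes>\<^sub>M borel)"
    and \<sigma>: "\<sigma> permutes UNIV"
  shows "stay_flux \<pi> q' (\<lambda>(x, y). l (y, x)) (inv \<sigma>) = stay_flux \<pi> q' l \<sigma>"
proof -
  note [measurable] = borel_measurable_flow_weight[OF pi_meas q_meas]
  let ?h = "\<lambda>(x, xt). flow_weight \<pi> q' x xt * ennreal (\<pi> x) * ennreal (\<pi> (perm_apply (inv \<sigma>) x))
      * l (perm_apply (inv \<sigma>) x, x)"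
  have "stay_flux \<pi> q' (\<lambda>(x, y). l (y, x)) (inv \<sigma>) = integral\<^sup>N (lborel \<Otimes>\<^sub>M lborel) ?h"
    by (simp add: stay_flux_def)
  also have "\<dots> = (\<integral>\<^sup>+ z. ?h (perm_apply \<sigma> (fst z), perm_apply \<sigma> (snd z)) \<partial>(lborel \<Otimes>\<^sub>M lborel))"
    by (rule nn_integral_pair_lborel_perm_apply[OF \<sigma>, symmetric]) measurable
  also have "\<dots> = stay_flux \<pi> q' l \<sigma>"
    unfolding stay_flux_def
    by (intro nn_integral_cong) (auto simp: perm_apply_inv_cancel flow_weight_perm_apply \<sigma> mult_ac)
  finally show ?thesis .
qed

lemma move_flux_reverse:
  assumes pi_meas[measurable]: "\<pi> \<in> borel_measurable borel"
    and q_meas: "(\<lambda>(a, b). q' a b) \<in> borel_measurable borel"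
    and q_sym: "\<And>a b. q' a b = q' b a"
    and l_meas[measurable]: "l \<in> borel_measurable (borel \<Otimes>\<^sub>M borel)"
    and \<sigma>: "\<sigma> permutes UNIV"
  shows "move_flux \<pi> q' (\<lambda>(x, y). l (y, x)) (inv \<sigma>) = move_flux \<pi> q' l \<sigma>"
proof -
  note [measurable] = borel_measurable_flow_weight[OF pi_meas q_meas]
  let ?h = "\<lambda>(x, xt). flow_weight \<pi> q' x xt * ennreal (\<pi> x) * ennreal (\<pi> (perm_apply (inv \<sigma>) xt))
      * l (perm_apply (inv \<sigma>) xt, x)"
  let ?h\<sigma> = "\<lambda>z. ?h (perm_apply \<sigma> (fst z), perm_apply \<sigma> (snd z))"
  have "move_flux \<pi> q' (\<lambda>(x, y). l (y, x)) (inv \<sigma>) = integral\<^sup>N (lborel \<Otimes>\<^sub>M lborel) ?h"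
    by (simp add: move_flux_def)
  also have "\<dots> = integral\<^sup>N (lborel \<Otimes>\<^sub>M lborel) ?h\<sigma>"
    by (rule nn_integral_pair_lborel_perm_apply[OF \<sigma>, symmetric]) measurable
  also have "\<dots> = (\<integral>\<^sup>+ z. ?h\<sigma> (snd z, fst z) \<partial>(lborel \<Otimes>\<^sub>M lborel))"
    by (rule lborel.nn_integral_pair_swap[symmetric]) measurable
  also have "\<dots> = move_flux \<pi> q' l \<sigma>"
    unfolding move_flux_def
    by (intro nn_integral_cong)
      (auto simp: perm_apply_inv_cancel flow_weight_perm_apply flow_weight_swap[OF q_sym] \<sigma> mult_ac)
  finally show ?thesis .
qed

lemma kernel_op_detailed_balance:
  assumes pi_meas: "\<pi> \<in> borel_measurable borel"
    and pi_nonneg: "\<And>x. \<pi> x \<ge> 0"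
    and q_meas: "(\<lambda>(a, b). q' a b) \<in> borel_measurable borel"
    and q_sym: "\<And>a b. q' a b = q' b a"
    and f_meas: "f \<in> borel_measurable borel"
  shows "(\<integral>\<^sup>+ x. ennreal (\<pi> x) * kernel_op \<pi> q' x (\<lambda>y. f (x, y)) \<partial>lborel)
       = (\<integral>\<^sup>+ x. ennreal (\<pi> x) * kernel_op \<pi> q' x (\<lambda>y. f (y, x)) \<partial>lborel)"
proof -
  have [measurable]: "f \<in> borel_measurable (borel \<Otimes>\<^sub>M borel)"
    using f_meas by (simp add: borel_prod)
  define f' where "f' = (\<lambda>(x, y). f (y, x))"
  have f'_meas[measurable]: "f' \<in> borel_measurable (borel \<Otimes>\<^sub>M borel)"
    unfolding f'_def by measurable
  have "(\<integral>\<^sup>+ x. ennreal (\<pi> x) * kernel_op \<pi> q' x (\<lambda>y. f (x, y)) \<partial>lborel)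
      = (\<Sum>\<sigma>\<in>perms. stay_flux \<pi> q' f \<sigma>) + (\<Sum>\<sigma>\<in>perms. move_flux \<pi> q' f \<sigma>)"
    by (rule nn_integral_kernel_op_eq_fluxes[OF pi_meas pi_nonneg q_meas]) measurable
  also have "\<dots> = (\<Sum>\<sigma>\<in>perms. stay_flux \<pi> q' f' (inv \<sigma>)) + (\<Sum>\<sigma>\<in>perms. move_flux \<pi> q' f' (inv \<sigma>))"
    by (simp add: f'_def perms_def stay_flux_reverse[OF pi_meas q_meas]
        move_flux_reverse[OF pi_meas q_meas q_sym])
  also have "\<dots> = (\<Sum>\<sigma>\<in>perms. stay_flux \<pi> q' f' \<sigma>) + (\<Sum>\<sigma>\<in>perms. move_flux \<pi> q' f' \<sigma>)"
    by (simp only: sum_perms_reindex_inv)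
  also have "\<dots> = (\<integral>\<^sup>+ x. ennreal (\<pi> x) * kernel_op \<pi> q' x (\<lambda>y. f (y, x)) \<partial>lborel)"
    using nn_integral_kernel_op_eq_fluxes[OF pi_meas pi_nonneg q_meas f'_meas] by (simp add: f'_def)
  finally show ?thesis .
qed

lemma kernel_op_const:
  assumes pi_nonneg: "\<And>x. \<pi> x \<ge> 0" and pi_pos: "\<pi> x > 0"
    and q_meas: "(\<lambda>(a, b). q' a b) \<in> borel_measurable borel"
    and q_nonneg: "\<And>a b. q' a b \<ge> 0"
    and q_prob: "\<And>b. (\<integral>\<^sup>+ a. ennreal (q' a b) \<partial>lborel) = 1"
  shows "kernel_op \<pi> q' x (\<lambda>_. c) = c"
proof -
  have weights_sum: "(\<Sum>\<sigma>\<in>perms. ennreal (\<pi> (perm_apply \<sigma> x) / norm_S \<pi> x xt) * c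
      + ennreal (\<pi> (perm_apply \<sigma> xt) / norm_S \<pi> x xt) * c) = c" for xt
  proof -
    let ?S = "norm_S \<pi> x xt"
    have S: "?S > 0"
      by (rule norm_S_pos) (simp_all add: pi_nonneg pi_pos)
    have nonneg: "\<pi> y / ?S \<ge> 0" for y
      using S pi_nonneg[of y] by simp
    have "(\<Sum>\<sigma>\<in>perms. ennreal (\<pi> (perm_apply \<sigma> x) / ?S) * c + ennreal (\<pi> (perm_apply \<sigma> xt) / ?S) * c)
        = (\<Sum>\<sigma>\<in>perms. ennreal (\<pi> (perm_apply \<sigma> x) / ?S + \<pi> (perm_apply \<sigma> xt) / ?S)) * c"
      by (simp add: sum_distrib_right distrib_right ennreal_plus nonneg)
    also have "\<dots> = ennreal (\<Sum>\<sigma>\<in>perms. \<pi> (perm_apply \<sigma> x) / ?S + \<pi> (perm_apply \<sigma> xt) / ?S) * c"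
      by (simp add: sum_ennreal add_nonneg_nonneg[OF nonneg nonneg])
    also have "(\<Sum>\<sigma>\<in>perms. \<pi> (perm_apply \<sigma> x) / ?S + \<pi> (perm_apply \<sigma> xt) / ?S) = ?S / ?S"
      unfolding norm_S_def by (simp add: add_divide_distrib[symmetric] sum_divide_distrib[symmetric])
    finally show ?thesis
      using S by simp
  qed
  have "kernel_op \<pi> q' x (\<lambda>_. c) = (\<integral>\<^sup>+ xt. ennreal (prop_q q' x xt) \<partial>lborel) * c"
    unfolding kernel_op_def weights_sum
    using borel_measurable_prop_q[OF q_meas, measurable] by (intro nn_integral_multc) measurable
  also have "\<dots> = c"
    by (simp add: nn_integral_prop_q q_meas q_nonneg q_prob)
  finally show ?thesis .
qed

lemma kernel_op_invariant:
  fixes \<pi> :: "real^'n^'t::finite \<Rightarrow> real"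
  assumes pi_meas: "\<pi> \<in> borel_measurable borel"
    and pi_nonneg: "\<And>x. \<pi> x \<ge> 0"
    and q_meas: "(\<lambda>(a, b). q' a b) \<in> borel_measurable borel"
    and q_nonneg: "\<And>a b. q' a b \<ge> 0"
    and q_prob: "\<And>b. (\<integral>\<^sup>+ a. ennreal (q' a b) \<partial>lborel) = 1"
    and q_sym: "\<And>a b. q' a b = q' b a"
    and g_meas[measurable]: "g \<in> borel_measurable borel"
  shows "(\<integral>\<^sup>+ x. ennreal (\<pi> x) * kernel_op \<pi> q' x g \<partial>lborel) = (\<integral>\<^sup>+ x. ennreal (\<pi> x) * g x \<partial>lborel)"
proof -
  have "(\<lambda>(x, y). g y) \<in> borel_measurable (borel :: ((real^'n^'t) \<times> (real^'n^'t)) measure)"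
    unfolding borel_prod[symmetric] by measurable
  from kernel_op_detailed_balance[OF pi_meas pi_nonneg q_meas q_sym this]
  have "(\<integral>\<^sup>+ x. ennreal (\<pi> x) * kernel_op \<pi> q' x g \<partial>lborel)
      = (\<integral>\<^sup>+ x. ennreal (\<pi> x) * kernel_op \<pi> q' x (\<lambda>_. g x) \<partial>lborel)"
    by simp
  also have "\<dots> = (\<integral>\<^sup>+ x. ennreal (\<pi> x) * g x \<partial>lborel)"
  proof (intro nn_integral_cong)
    fix x
    show "ennreal (\<pi> x) * kernel_op \<pi> q' x (\<lambda>_. g x) = ennreal (\<pi> x) * g x"
    proof (cases "\<pi> x > 0")
      case True
      then show ?thesis
        by (simp add: kernel_op_const pi_nonneg q_meas q_nonneg q_prob)
    next
      case False
      then show ?thesis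
        using pi_nonneg[of x] by simp
    qed
  qed
  finally show ?thesis .
qed

theorem mainTheorem3:
  fixes \<pi> :: "real^'n^'t::finite \<Rightarrow> real"
    and q' :: "real^'n \<Rightarrow> real^'n \<Rightarrow> real"
  assumes pi_meas: "\<pi> \<in> borel_measurable borel"
    and pi_nonneg: "\<And>x. \<pi> x \<ge> 0"
    and pi_prob: "(\<integral>\<^sup>+ x. ennreal (\<pi> x) \<partial>lborel) = 1"
    and q_meas: "(\<lambda>(a, b). q' a b) \<in> borel_measurable borel"
    and q_nonneg: "\<And>a b. q' a b \<ge> 0"
    and q_prob: "\<And>b. (\<integral>\<^sup>+ a. ennreal (q' a b) \<partial>lborel) = 1"
    and q_sym: "\<And>a b. q' a b = q' b a"
  shows "(\<forall>f :: (real^'n^'t) \<times> (real^'n^'t) \<Rightarrow> ennreal. f \<in> borel_measurable borel \<longrightarrow>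
            (\<integral>\<^sup>+ x. ennreal (\<pi> x) * kernel_op \<pi> q' x (\<lambda>y. f (x, y)) \<partial>lborel)
          = (\<integral>\<^sup>+ x. ennreal (\<pi> x) * kernel_op \<pi> q' x (\<lambda>y. f (y, x)) \<partial>lborel))
       \<and> (\<forall>g :: real^'n^'t \<Rightarrow> ennreal. g \<in> borel_measurable borel \<longrightarrow>
            (\<integral>\<^sup>+ x. ennreal (\<pi> x) * kernel_op \<pi> q' x g \<partial>lborel)
          = (\<integral>\<^sup>+ x. ennreal (\<pi> x) * g x \<partial>lborel))"
  using kernel_op_detailed_balance[OF pi_meas pi_nonneg q_meas q_sym]
    kernel_op_invariant[OF pi_meas pi_nonneg q_meas q_nonneg q_prob q_sym]
  by blast

end
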